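(* Let $2 \le k \le n$ be integers. Then $$N(OM,k,n)=\begin{cases} \left\lceil \frac{n-1}{k-1} \right\rceil & \text{if } n \text{ is even},\\[2pt] \left\lceil \frac{n-2}{k-1} \right\rceil & \text{if } n \text{ is odd.}\end{cases}$$
   Context: We are given $n$ balls, namely the set $[n]=\{1,\dots,n\}$, each colored with one of two colors (say red and blue) by an unknown coloring. A ball $i$ is a majority ball if more than $n/2$ balls have the same color as $i$. A query is a subset $Q\subseteq[n]$ with $|Q|=k$. In the Output (Partition) Model (OM), the answer to a query $Q$ is the unordered partition $\{Q',Q''\}$ of $Q$ into the set of balls of one color and the set of balls of the other color (one part may be empty), with no indication of which color is which. A non-adaptive strategy is a family of queries $Q_1,\dots,Q_q$ fixed in advance (all asked simultaneously). It succeeds if for every coloring and every sequence of answers consistent with it, the answers determine the outcome: either every coloring consistent with these answers has no majority ball (and then we declare that there is none), or there is a ball that is a majority ball in every coloring consistent with these answers. $N(OM,k,n)$ denotes the minimum number $q$ of queries in a successful non-adaptive strategy in this model. *)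

theory Defs
  imports Complex_Main
begin

text \<open>Balls are 1..n; a coloring is a map to bool (two colors).
  Only the values on 1..n matter.\<close>

definition is_majority_ball :: "nat \<Rightarrow> (nat \<Rightarrow> bool) \<Rightarrow> nat \<Rightarrow> bool" where
  "is_majority_ball n c i \<longleftrightarrow> i \<in> {1..n} \<and> 2 * card {j \<in> {1..n}. c j = c i} > n"

text \<open>Answer in the Output (Partition) Model: the unordered partition of Q
  into its two color classes (one may be empty).\<close>
definition om_answer :: "(nat \<Rightarrow> bool) \<Rightarrow> nat set \<Rightarrow> nat set set" where
  "om_answer c Q = {{i \<in> Q. c i}, {i \<in> Q. \<not> c i}}"

definition om_consistent :: "nat \<Rightarrow> nat set list \<Rightarrow> (nat \<Rightarrow> bool) \<Rightarrow> (nat \<Rightarrow> bool) \<Rightarrow> bool" where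
  "om_consistent n Qs c c' \<longleftrightarrow> (\<forall>Q \<in> set Qs. om_answer c' Q = om_answer c Q)"

text \<open>A non-adaptive strategy (list of queries) succeeds if for every coloring c
  the answers determine the outcome.  Colorings are compared only on 1..n.\<close>
definition om_successful :: "nat \<Rightarrow> nat \<Rightarrow> nat set list \<Rightarrow> bool" where
  "om_successful k n Qs \<longleftrightarrow>
     (\<forall>Q \<in> set Qs. Q \<subseteq> {1..n} \<and> card Q = k) \<and>
     (\<forall>c. (\<forall>c'. om_consistent n Qs c c' \<longrightarrow> (\<forall>i. \<not> is_majority_ball n c' i))
        \<or> (\<exists>i. \<forall>c'. om_consistent n Qs c c' \<longrightarrow> is_majority_ball n c' i))"

definition N_OM :: "nat \<Rightarrow> nat \<Rightarrow> nat" where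
  "N_OM k n = (LEAST q. \<exists>Qs. length Qs = q \<and> om_successful k n Qs)"

end

(*
  Call a set of balls query-closed if every query contains it or misses it; these are the
  unions of components of the hypergraph formed by the queries, and swapping the two colours
  on such a set changes no answer.  A query of size k merges at most k components, so q
  queries leave at least n - q (k - 1) components.

  For even n, two components yield a nonempty query-closed F with |F| <= n/2: a colouring
  whose n/2 red balls contain F has no majority ball, while flipping F creates one.  For odd
  n, three components yield disjoint query-closed A and B and a red set R of (n + 1)/2 balls
  holding a strict majority inside both; flipping A or B strips any given red ball of its
  majority, so no ball is certain to be a majority ball.

  Conversely, a chain of queries each overlapping the previous one connects the first
  min n (q (k - 1) + 1) balls, so the answers determine the colouring there up to a swap.
  This decides the majority once all n balls are covered, and for odd n already when only
  ball n is left out: either one colour holds at least (n + 1)/2 of the first n - 1 balls, or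
  ball n is a majority ball.
*)

theory Submission
  imports Defs "HOL-Library.Disjoint_Sets"
begin

section \<open>Answers and majority balls\<close>

definition query_closed :: "'a set set \<Rightarrow> 'a set \<Rightarrow> bool" where
  "query_closed \<Q> B \<longleftrightarrow> (\<forall>Q\<in>\<Q>. Q \<subseteq> B \<or> Q \<inter> B = {})"

lemma query_closed_insert:
  "query_closed (insert Q \<Q>) B \<longleftrightarrow> (Q \<subseteq> B \<or> Q \<inter> B = {}) \<and> query_closed \<Q> B"
  by (simp add: query_closed_def)

lemma query_closed_Union:
  assumes "\<forall>B\<in>M. query_closed \<Q> B"
  shows "query_closed \<Q> (\<Union>M)"
  using assms unfolding query_closed_def by blast

lemma om_answer_eq_iff:
  "om_answer c' Q = om_answer c Q \<longleftrightarrow> (\<forall>j\<in>Q. c' j = c j) \<or> (\<forall>j\<in>Q. c' j \<noteq> c j)"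
proof
  assume "om_answer c' Q = om_answer c Q"
  moreover have "{j\<in>Q. c' j} \<in> om_answer c' Q"
    by (simp add: om_answer_def)
  ultimately have "{j\<in>Q. c' j} = {j\<in>Q. c j} \<or> {j\<in>Q. c' j} = {j\<in>Q. \<not> c j}"
    by (simp add: om_answer_def)
  then show "(\<forall>j\<in>Q. c' j = c j) \<or> (\<forall>j\<in>Q. c' j \<noteq> c j)"
    by (auto simp: set_eq_iff)
next
  assume "(\<forall>j\<in>Q. c' j = c j) \<or> (\<forall>j\<in>Q. c' j \<noteq> c j)"
  then show "om_answer c' Q = om_answer c Q"
    by (auto simp: om_answer_def insert_commute)
qed

lemma om_answer_eq_subset:
  "X \<subseteq> Y \<Longrightarrow> om_answer c' Y = om_answer c Y \<Longrightarrow> om_answer c' X = om_answer c X"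
  unfolding om_answer_eq_iff by blast

lemma om_answer_eq_Un:
  assumes "X \<inter> Y \<noteq> {}" "om_answer c' X = om_answer c X" "om_answer c' Y = om_answer c Y"
  shows "om_answer c' (X \<union> Y) = om_answer c (X \<union> Y)"
  using assms unfolding om_answer_eq_iff by blast

lemma om_answer_monochromatic:
  "B \<in> om_answer c Q \<Longrightarrow> i \<in> B \<Longrightarrow> j \<in> B \<Longrightarrow> c j = c i"
  by (auto simp: om_answer_def)

lemma om_consistent_refl: "om_consistent n Qs c c"
  by (simp add: om_consistent_def)

lemma om_consistent_flip:
  assumes "query_closed (set Qs) F"
  shows "om_consistent n Qs c (\<lambda>j. c j \<noteq> (j \<in> F))"
  unfolding om_consistent_def om_answer_eq_iff
proof
  fix Q assume "Q \<in> set Qs"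
  then have "Q \<subseteq> F \<or> Q \<inter> F = {}"
    using assms by (simp add: query_closed_def)
  then show "(\<forall>j\<in>Q. (c j \<noteq> (j \<in> F)) = c j) \<or> (\<forall>j\<in>Q. (c j \<noteq> (j \<in> F)) \<noteq> c j)"
    by blast
qed

lemma is_majority_ball_if_monochromatic:
  assumes "B \<subseteq> {1..n}" "i \<in> B" "\<forall>j\<in>B. c j = c i" "n < 2 * card B"
  shows "is_majority_ball n c i"
proof -
  have "card B \<le> card {j \<in> {1..n}. c j = c i}"
    using assms(1,3) by (intro card_mono) auto
  then show ?thesis
    using assms(1,2,4) unfolding is_majority_ball_def by auto
qed

lemma is_majority_ball_indicator:
  assumes "R \<subseteq> {1..n}" "i \<in> {1..n}"
  shows "is_majority_ball n (\<lambda>j. j \<in> R) i \<longleftrightarrow>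
           (if i \<in> R then n < 2 * card R else 2 * card R < n)"
proof (cases "i \<in> R")
  case True
  then have "{j \<in> {1..n}. (j \<in> R) = (i \<in> R)} = R"
    using assms(1) by auto
  then show ?thesis
    using True assms(2) by (simp add: is_majority_ball_def)
next
  case False
  then have "{j \<in> {1..n}. (j \<in> R) = (i \<in> R)} = {1..n} - R"
    by auto
  moreover have "card ({1..n} - R) = n - card R"
    using assms(1) by (simp add: card_Diff_subset finite_subset)
  moreover have "card R \<le> n"
    using card_mono[OF _ assms(1)] by simp
  ultimately show ?thesis
    using False assms(2) by (simp add: is_majority_ball_def, arith)
qed

lemma is_majority_ball_cong_om_answer:
  assumes "om_answer c' {1..n} = om_answer c {1..n}"
  shows "is_majority_ball n c' i \<longleftrightarrow> is_majority_ball n c i"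
proof -
  have "{j \<in> {1..n}. c' j = c' i} = {j \<in> {1..n}. c j = c i}" if "i \<in> {1..n}"
  proof -
    consider "\<forall>j\<in>{1..n}. c' j = c j" | "\<forall>j\<in>{1..n}. c' j \<noteq> c j"
      using assms unfolding om_answer_eq_iff by blast
    then show ?thesis
      using that by cases auto
  qed
  then show ?thesis
    unfolding is_majority_ball_def by auto
qed

lemma om_answer_odd_prefix_cases [consumes 1]:
  assumes "odd n"
  obtains (big) B where "B \<in> om_answer c {1..n - 1}" "n < 2 * card B"
    | (balanced) "\<forall>B \<in> om_answer c {1..n - 1}. 2 * card B = n - 1"
proof -
  let ?X = "{1..n - 1}"
  let ?T = "{j \<in> ?X. c j}" and ?F = "{j \<in> ?X. \<not> c j}"
  have "card (?T \<union> ?F) = card ?T + card ?F"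
    by (rule card_Un_disjoint) auto
  moreover have "?T \<union> ?F = ?X"
    by auto
  ultimately have parts: "card ?T + card ?F = n - 1"
    by simp
  show thesis
  proof (cases "n < 2 * card ?T \<or> n < 2 * card ?F")
    case True
    moreover have "?T \<in> om_answer c ?X" "?F \<in> om_answer c ?X"
      by (simp_all add: om_answer_def)
    ultimately show thesis
      using big by blast
  next
    case False
    moreover have "2 * card ?T \<noteq> n" "2 * card ?F \<noteq> n"
      using assms by (metis dvd_triv_left)+
    ultimately have "2 * card ?T = n - 1" "2 * card ?F = n - 1"
      using parts by linarith+
    then show thesis
      using balanced by (simp add: om_answer_def)
  qed
qed

lemma odd_majority_determined:
  assumes "odd n"
  shows "\<exists>i. \<forall>c'. om_answer c' {1..n - 1} = om_answer c {1..n - 1} \<longrightarrow> is_majority_ball n c' i"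
  using assms
proof (cases rule: om_answer_odd_prefix_cases[where c = c])
  case (big B)
  then obtain i where i: "i \<in> B"
    by (metis card.empty ex_in_conv mult_0_right not_less0)
  have "is_majority_ball n c' i" if "om_answer c' {1..n - 1} = om_answer c {1..n - 1}" for c'
  proof (rule is_majority_ball_if_monochromatic)
    have "B \<in> om_answer c' {1..n - 1}"
      using big(1) that by simp
    then show "\<forall>j\<in>B. c' j = c' i"
      using om_answer_monochromatic i by blast
    show "B \<subseteq> {1..n}"
      using big(1) by (auto simp: om_answer_def)
  qed (use big(2) i in simp_all)
  then show ?thesis
    by blast
next
  case balanced
  have "is_majority_ball n c' n" if "om_answer c' {1..n - 1} = om_answer c {1..n - 1}" for c'
  proof -
    let ?B = "{j \<in> {1..n - 1}. c' j = c' n}"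
    have "?B = {j \<in> {1..n - 1}. c' j} \<or> ?B = {j \<in> {1..n - 1}. \<not> c' j}"
      by (cases "c' n") simp_all
    then have "?B \<in> om_answer c' {1..n - 1}"
      by (auto simp: om_answer_def)
    then have "2 * card ?B = n - 1"
      using balanced that by simp
    moreover have "n \<notin> ?B" "1 \<le> n"
      using assms by (auto elim: oddE)
    ultimately have "n < 2 * card (insert n ?B)"
      by simp
    then show ?thesis
      using \<open>1 \<le> n\<close> by (intro is_majority_ball_if_monochromatic[of "insert n ?B"]) auto
  qed
  then show ?thesis
    by blast
qed

section \<open>Partitions into query-closed blocks\<close>

lemma card_blocks_meeting_le:
  assumes "partition_on U P" "finite Q"
  shows "card {B \<in> P. B \<inter> Q \<noteq> {}} \<le> card Q"
proof -
  let ?M = "{B \<in> P. B \<inter> Q \<noteq> {}}"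
  define pick where "pick B = (SOME x. x \<in> B \<inter> Q)" for B
  have pick: "pick B \<in> B \<inter> Q" if B: "B \<in> ?M" for B
  proof -
    obtain x where "x \<in> B \<inter> Q"
      using B by blast
    then show ?thesis
      unfolding pick_def by (rule someI)
  qed
  have "inj_on pick ?M"
  proof (rule inj_onI)
    fix B B' assume B: "B \<in> ?M" and B': "B' \<in> ?M" and eq: "pick B = pick B'"
    have "B \<inter> B' \<noteq> {}"
      using pick[OF B] pick[OF B'] eq by auto
    then show "B = B'"
      using disjointD[OF partition_onD2[OF assms(1)], of B B'] B B' by auto
  qed
  moreover have "pick ` ?M \<subseteq> Q"
    using pick by blast
  ultimately show ?thesis
    using assms(2) by (rule card_inj_on_le)
qed

lemma partition_on_merge:
  assumes "partition_on U P" "finite U" "Q \<subseteq> U" "Q \<noteq> {}"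
  defines "M \<equiv> {B \<in> P. B \<inter> Q \<noteq> {}}"
  shows "partition_on U (insert (\<Union>M) (P - M))"
    and "card P + 1 \<le> card (insert (\<Union>M) (P - M)) + card Q"
proof -
  have Q_in: "Q \<subseteq> \<Union>M"
    using assms(3) partition_onD1[OF assms(1)] by (auto simp: M_def)
  have UM_new: "\<Union>M \<notin> P - M"
    using Q_in assms(4) by (auto simp: M_def)
  have disj: "disjoint P"
    using assms(1) by (rule partition_onD2)
  have sep: "B \<inter> \<Union>M = {}" if "B \<in> P - M" for B
    using that disjointD[OF disj] unfolding M_def by blast
  show "partition_on U (insert (\<Union>M) (P - M))"
  proof (rule partition_onI)
    show "\<Union>(insert (\<Union>M) (P - M)) = U"
      using partition_onD1[OF assms(1)] by (auto simp: M_def)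
    show "{} \<notin> insert (\<Union>M) (P - M)"
      using partition_onD3[OF assms(1)] Q_in assms(4) by auto
    show "disjnt p q" if "p \<in> insert (\<Union>M) (P - M)" "q \<in> insert (\<Union>M) (P - M)" "p \<noteq> q" for p q
    proof (cases "p = \<Union>M \<or> q = \<Union>M")
      case True
      then show ?thesis
        using that sep by (auto simp: disjnt_def)
    next
      case False
      then show ?thesis
        using that disjointD[OF disj] by (auto simp: disjnt_def)
    qed
  qed
  have "finite P"
    using assms(1,2) by (rule finite_elements[rotated])
  moreover have "M \<subseteq> P" "M \<noteq> {}"
    using Q_in assms(4) by (auto simp: M_def)
  ultimately have "card (insert (\<Union>M) (P - M)) = card P - card M + 1" "0 < card M" "card M \<le> card P"
    using UM_new card_mono[of P M] finite_subset[of M P] by (simp_all add: card_Diff_subset card_gt_0_iff)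
  moreover have "card M \<le> card Q"
    unfolding M_def using assms(1) finite_subset[OF assms(3,2)] by (rule card_blocks_meeting_le)
  ultimately show "card P + 1 \<le> card (insert (\<Union>M) (P - M)) + card Q"
    by linarith
qed

lemma exists_query_closed_partition:
  assumes "finite U" "\<forall>Q\<in>set Qs. Q \<subseteq> U \<and> Q \<noteq> {} \<and> card Q \<le> k"
  shows "\<exists>P. partition_on U P \<and> (\<forall>B\<in>P. query_closed (set Qs) B)
           \<and> card U \<le> card P + length Qs * (k - 1)"
  using assms(2)
proof (induction Qs)
  case Nil
  have "partition_on U ((\<lambda>x. {x}) ` U)" "card ((\<lambda>x. {x}) ` U) = card U"
    by (simp_all add: partition_on_singletons card_image)
  then show ?case
    by (auto simp: query_closed_def)
next
  case (Cons Q Qs)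
  then obtain P where P: "partition_on U P" "\<forall>B\<in>P. query_closed (set Qs) B"
    "card U \<le> card P + length Qs * (k - 1)"
    by auto
  have Q: "Q \<subseteq> U" "Q \<noteq> {}" "card Q \<le> k"
    using Cons.prems by auto
  define M where "M = {B \<in> P. B \<inter> Q \<noteq> {}}"
  let ?P' = "insert (\<Union>M) (P - M)"
  have merged: "partition_on U ?P'" "card P + 1 \<le> card ?P' + card Q"
    using partition_on_merge[OF P(1) assms(1) Q(1,2)] unfolding M_def by simp_all
  have closed: "query_closed (set (Q # Qs)) B" if "B \<in> ?P'" for B
  proof -
    have "Q \<subseteq> \<Union>M"
      using Q(1) partition_onD1[OF P(1)] by (auto simp: M_def)
    moreover have "query_closed (set Qs) (\<Union>M)"
      using P(2) by (intro query_closed_Union) (auto simp: M_def)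
    moreover have "Q \<inter> B = {} \<and> query_closed (set Qs) B" if "B \<in> P - M"
      using that P(2) by (auto simp: M_def)
    ultimately show ?thesis
      using that by (auto simp: query_closed_insert)
  qed
  have "card U \<le> card ?P' + length (Q # Qs) * (k - 1)"
  proof -
    have "length (Q # Qs) * (k - 1) = length Qs * (k - 1) + (k - 1)"
      by simp
    then show ?thesis
      using P(3) Q(3) merged(2) by linarith
  qed
  with merged(1) closed show ?case
    by blast
qed

lemma sum_card_blocks_le:
  assumes "partition_on U P" "finite U" "T \<subseteq> P"
  shows "(\<Sum>B\<in>T. card B) \<le> card U"
proof -
  have "(\<Sum>B\<in>T. card B) = card (\<Union>T)"
    using pairwise_subset[OF partition_onD2[OF assms(1)] assms(3)]
      partition_onD1[OF assms(1)] assms(2,3)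
    by (intro card_Union_disjoint[symmetric]) (auto intro: finite_subset)
  also have "\<dots> \<le> card U"
    using partition_onD1[OF assms(1)] assms(2,3) by (intro card_mono) auto
  finally show ?thesis .
qed

section \<open>Lower bounds\<close>

lemma card_symdiff:
  assumes "finite R" "finite A"
  shows "card ((R - A) \<union> (A - R)) + 2 * card (R \<inter> A) = card R + card A"
proof -
  have "card ((R - A) \<union> (A - R)) = card (R - A) + card (A - R)"
    using assms by (intro card_Un_disjoint) auto
  moreover have "card R = card (R \<inter> A) + card (R - A)"
    using assms(1) by (rule card_Int_Diff)
  moreover have "card A = card (R \<inter> A) + card (A - R)"
    using card_Int_Diff[OF assms(2), of R] by (simp add: Int_commute)
  ultimately show ?thesis by linarith
qed

lemma exists_superset_with_card:
  assumes "finite U" "S \<subseteq> U" "card S \<le> r" "r \<le> card U"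
  shows "\<exists>R. S \<subseteq> R \<and> R \<subseteq> U \<and> card R = r"
proof -
  have "r - card S \<le> card (U - S)"
    using assms by (simp add: card_Diff_subset finite_subset)
  then obtain G where G: "G \<subseteq> U - S" "card G = r - card S"
    by (rule obtain_subset_with_card_n)
  have "card (S \<union> G) = r"
    using G assms by (subst card_Un_disjoint) (auto intro: finite_subset)
  then show ?thesis
    using G assms(2) by blast
qed

lemma obtain_strict_majority_subset:
  assumes "finite X" "X \<noteq> {}"
  obtains T where "T \<subseteq> X" "card T = card X div 2 + 1"
proof -
  have "card X div 2 + 1 \<le> card X"
    using assms by (simp add: Suc_leI card_gt_0_iff)
  then show thesis
    using that by (meson obtain_subset_with_card_n)
qed

lemma pair_halves_less_if_three_parts:
  fixes x y z n :: nat
  assumes "x + y + z \<le> n" "odd n" "0 < x" "0 < y" "0 < z"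
  shows "x div 2 + y div 2 < n div 2 \<or> x div 2 + z div 2 < n div 2 \<or> y div 2 + z div 2 < n div 2"
proof (cases "n = 3")
  case True
  then have "x = 1" "y = 1" "z = 1"
    using assms(1,3-5) by linarith+
  then show ?thesis
    using True by simp
next
  case False
  have "n \<noteq> 4"
    using assms(2) by auto
  moreover have "x = 2 * (x div 2) + x mod 2" "y = 2 * (y div 2) + y mod 2" "z = 2 * (z div 2) + z mod 2"
    "n = 2 * (n div 2) + 1"
    using assms(2) by simp_all
  ultimately show ?thesis
    using False assms(1,3-5) by linarith
qed

lemma obtain_three_elements:
  assumes "2 < card P"
  obtains A B C where "A \<in> P" "B \<in> P" "C \<in> P" "A \<noteq> B" "B \<noteq> C" "A \<noteq> C"
proof -
  obtain T where "T \<subseteq> P" "card T = 3" "finite T"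
    using assms by (metis Suc_leI numeral_2_eq_2 numeral_3_eq_3 obtain_subset_with_card_n)
  then show thesis
    using that by (auto simp: card_3_iff)
qed

lemma not_om_successful_if_undetermined:
  assumes "om_consistent n Qs c c1" "is_majority_ball n c1 i1"
    and "\<And>i. \<exists>c'. om_consistent n Qs c c' \<and> \<not> is_majority_ball n c' i"
  shows "\<not> om_successful k n Qs"
proof
  assume "om_successful k n Qs"
  then have "(\<forall>c'. om_consistent n Qs c c' \<longrightarrow> (\<forall>i. \<not> is_majority_ball n c' i))
      \<or> (\<exists>i. \<forall>c'. om_consistent n Qs c c' \<longrightarrow> is_majority_ball n c' i)"
    unfolding om_successful_def by (elim conjE allE)
  then show False
    using assms by meson
qed

lemma not_om_successful_even:
  assumes "even n" "query_closed (set Qs) F" "F \<subseteq> {1..n}" "F \<noteq> {}" "2 * card F \<le> n"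
  shows "\<not> om_successful k n Qs"
proof -
  obtain R where R: "F \<subseteq> R" "R \<subseteq> {1..n}" "card R = n div 2"
    using exists_superset_with_card[of "{1..n}" F "n div 2"] assms(3,5) by fastforce
  obtain i1 where i1: "i1 \<in> F"
    using assms(4) by blast
  let ?c = "\<lambda>j. j \<in> R"
  show ?thesis
  proof (rule not_om_successful_if_undetermined)
    show "om_consistent n Qs ?c (\<lambda>j. ?c j \<noteq> (j \<in> F))"
      using assms(2) by (rule om_consistent_flip)
    have "(\<lambda>j. ?c j \<noteq> (j \<in> F)) = (\<lambda>j. j \<in> R - F)"
      using R(1) by auto
    moreover have "card (R - F) < card R"
      using R(1,2) assms(4) by (intro psubset_card_mono) (auto intro: finite_subset)
    then have "2 * card (R - F) < n"
      using R(3) assms(1) by (simp add: even_two_times_div_two)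
    moreover have "R - F \<subseteq> {1..n}" "i1 \<in> {1..n}" "i1 \<notin> R - F"
      using R(2) i1 assms(3) by auto
    ultimately show "is_majority_ball n (\<lambda>j. ?c j \<noteq> (j \<in> F)) i1"
      using is_majority_ball_indicator[of "R - F" n i1] by simp
    show "\<exists>c'. om_consistent n Qs ?c c' \<and> \<not> is_majority_ball n c' i" for i
      using is_majority_ball_indicator[OF R(2), of i] R(3) assms(1) om_consistent_refl
      by (cases "i \<in> {1..n}") (auto simp: is_majority_ball_def)
  qed
qed

lemma obtain_odd_majority_set:
  assumes "odd n" "A \<subseteq> {1..n}" "B \<subseteq> {1..n}" "A \<noteq> {}" "B \<noteq> {}"
    and "card A div 2 + card B div 2 < n div 2"
  obtains R where "R \<subseteq> {1..n}" "card R = n div 2 + 1"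
    "card A < 2 * card (R \<inter> A)" "card B < 2 * card (R \<inter> B)"
proof -
  have fin: "finite A" "finite B"
    using assms(2,3) by (auto intro: finite_subset)
  obtain RA where RA: "RA \<subseteq> A" "card RA = card A div 2 + 1"
    using fin(1) assms(4) by (rule obtain_strict_majority_subset)
  obtain RB where RB: "RB \<subseteq> B" "card RB = card B div 2 + 1"
    using fin(2) assms(5) by (rule obtain_strict_majority_subset)
  have "card (RA \<union> RB) \<le> n div 2 + 1"
    using card_Un_le[of RA RB] RA(2) RB(2) assms(6) by linarith
  moreover have "n div 2 + 1 \<le> n"
    using assms(1) by (elim oddE) simp
  moreover have "RA \<union> RB \<subseteq> {1..n}"
    using RA(1) RB(1) assms(2,3) by blast
  ultimately obtain R where R: "RA \<union> RB \<subseteq> R" "R \<subseteq> {1..n}" "card R = n div 2 + 1"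
    using exists_superset_with_card[of "{1..n}" "RA \<union> RB" "n div 2 + 1"] by auto
  have "card RA \<le> card (R \<inter> A)" "card RB \<le> card (R \<inter> B)"
    using R(1) RA(1) RB(1) fin by (auto intro: card_mono)
  then have "card A < 2 * card (R \<inter> A)" "card B < 2 * card (R \<inter> B)"
    using RA(2) RB(2) by linarith+
  then show thesis
    using that R(2,3) by blast
qed

text \<open>Flipping a set \<open>X\<close> in which the red set \<open>R\<close> holds a strict majority shrinks the
  red set below \<open>n / 2\<close>, so every red ball outside \<open>X\<close> loses its majority.\<close>

lemma not_is_majority_ball_flip:
  assumes "odd n" "R \<subseteq> {1..n}" "card R = n div 2 + 1"
    and "X \<subseteq> {1..n}" "card X < 2 * card (R \<inter> X)" "i \<in> R - X"
  shows "\<not> is_majority_ball n (\<lambda>j. (j \<in> R) \<noteq> (j \<in> X)) i"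
proof -
  have "finite R" "finite X"
    using assms(2,4) by (auto intro: finite_subset)
  then have "card ((R - X) \<union> (X - R)) < card R"
    using card_symdiff[of R X] assms(5) by linarith
  then have "2 * card ((R - X) \<union> (X - R)) < n"
    using assms(3) odd_two_times_div_two_succ[OF assms(1)] by linarith
  moreover have "(\<lambda>j. (j \<in> R) \<noteq> (j \<in> X)) = (\<lambda>j. j \<in> (R - X) \<union> (X - R))"
    by auto
  moreover have "(R - X) \<union> (X - R) \<subseteq> {1..n}" "i \<in> {1..n}" "i \<in> (R - X) \<union> (X - R)"
    using assms(2,4,6) by auto
  ultimately show ?thesis
    using is_majority_ball_indicator[of "(R - X) \<union> (X - R)" n i] by simp
qed

lemma not_om_successful_odd:
  assumes "odd n" "query_closed (set Qs) A" "query_closed (set Qs) B"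
    and "A \<subseteq> {1..n}" "B \<subseteq> {1..n}" "A \<inter> B = {}" "A \<noteq> {}" "B \<noteq> {}"
    and "card A div 2 + card B div 2 < n div 2"
  shows "\<not> om_successful k n Qs"
proof -
  obtain R where R: "R \<subseteq> {1..n}" "card R = n div 2 + 1"
    and major_A: "card A < 2 * card (R \<inter> A)" and major_B: "card B < 2 * card (R \<inter> B)"
    using obtain_odd_majority_set[OF assms(1,4,5,7,8,9)] by blast
  let ?c = "\<lambda>j. j \<in> R"
  obtain i1 where i1: "i1 \<in> R"
    using R(2) by fastforce
  show ?thesis
  proof (rule not_om_successful_if_undetermined)
    show "om_consistent n Qs ?c ?c"
      by (rule om_consistent_refl)
    show "is_majority_ball n ?c i1"
      using is_majority_ball_indicator[OF R(1), of i1] R i1 by auto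
    show "\<exists>c'. om_consistent n Qs ?c c' \<and> \<not> is_majority_ball n c' i" for i
    proof (cases "i \<in> R")
      case False
      have "\<not> is_majority_ball n ?c i"
      proof (cases "i \<in> {1..n}")
        case True
        then show ?thesis
          using is_majority_ball_indicator[OF R(1) True] \<open>i \<notin> R\<close> R(2) by simp
      qed (auto simp: is_majority_ball_def)
      then show ?thesis
        using om_consistent_refl by blast
    next
      case True
      then consider "i \<in> R - A" | "i \<in> R - B"
        using assms(6) by blast
      then show ?thesis
        using not_is_majority_ball_flip[OF assms(1) R assms(4) major_A]
          not_is_majority_ball_flip[OF assms(1) R assms(5) major_B]
          om_consistent_flip[OF assms(2)] om_consistent_flip[OF assms(3)] by cases blast+
    qed
  qed
qed

lemma om_successful_partition:
  assumes "om_successful k n Qs" "1 \<le> k"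
  obtains P where "partition_on {1..n} P" "\<forall>B\<in>P. query_closed (set Qs) B"
    "n \<le> card P + length Qs * (k - 1)"
proof -
  have "\<forall>Q\<in>set Qs. Q \<subseteq> {1..n} \<and> Q \<noteq> {} \<and> card Q \<le> k"
    using assms unfolding om_successful_def by fastforce
  then show thesis
    using exists_query_closed_partition[of "{1..n}" Qs k] that by auto
qed

lemma om_successful_length_even:
  assumes "om_successful k n Qs" "1 \<le> k" "even n"
  shows "n - 1 \<le> length Qs * (k - 1)"
proof -
  obtain P where P: "partition_on {1..n} P" "\<forall>B\<in>P. query_closed (set Qs) B"
    "n \<le> card P + length Qs * (k - 1)"
    using assms(1,2) by (rule om_successful_partition)
  have large: "n < 2 * card X" if X: "X \<in> P" for X
  proof (rule ccontr)
    assume "\<not> n < 2 * card X"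
    then have "\<not> om_successful k n Qs"
      using X P(2) partition_onD1[OF P(1)] partition_onD3[OF P(1)]
      by (intro not_om_successful_even[OF assms(3)]) auto
    then show False
      using assms(1) by contradiction
  qed
  have "card P \<le> 1"
  proof (rule ccontr)
    assume "\<not> card P \<le> 1"
    then obtain A B where AB: "A \<in> P" "B \<in> P" "A \<noteq> B"
      using card_le_Suc0_iff_eq[OF finite_elements[OF _ P(1)]] by auto
    then have "card A + card B \<le> n"
      using sum_card_blocks_le[OF P(1), of "{A, B}"] by simp
    then show False
      using large[OF AB(1)] large[OF AB(2)] by linarith
  qed
  then show ?thesis
    using P(3) by linarith
qed

lemma om_successful_length_odd:
  assumes "om_successful k n Qs" "1 \<le> k" "odd n"
  shows "n - 2 \<le> length Qs * (k - 1)"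
proof -
  obtain P where P: "partition_on {1..n} P" "\<forall>B\<in>P. query_closed (set Qs) B"
    "n \<le> card P + length Qs * (k - 1)"
    using assms(1,2) by (rule om_successful_partition)
  have block: "X \<subseteq> {1..n}" "X \<noteq> {}" "0 < card X" if "X \<in> P" for X
    using partition_onD1[OF P(1)] partition_onD3[OF P(1)] that
    by (auto simp: card_gt_0_iff intro: finite_subset)
  have large: "n div 2 \<le> card A div 2 + card B div 2" if AB: "A \<in> P" "B \<in> P" "A \<noteq> B" for A B
  proof (rule ccontr)
    assume "\<not> n div 2 \<le> card A div 2 + card B div 2"
    then have "\<not> om_successful k n Qs"
      using not_om_successful_odd[OF assms(3) P(2)[rule_format, OF AB(1)] P(2)[rule_format, OF AB(2)]
          block(1)[OF AB(1)] block(1)[OF AB(2)] disjointD[OF partition_onD2[OF P(1)] AB]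
          block(2)[OF AB(1)] block(2)[OF AB(2)]]
      by simp
    then show False
      using assms(1) by contradiction
  qed
  have "card P \<le> 2"
  proof (rule ccontr)
    assume "\<not> card P \<le> 2"
    then have "2 < card P"
      by simp
    then obtain A B C where ABC: "A \<in> P" "B \<in> P" "C \<in> P" "A \<noteq> B" "B \<noteq> C" "A \<noteq> C"
      by (rule obtain_three_elements)
    then have "card A + card B + card C \<le> n"
      using sum_card_blocks_le[OF P(1), of "{A, B, C}"] by simp
    then have "card A div 2 + card B div 2 < n div 2 \<or> card A div 2 + card C div 2 < n div 2
        \<or> card B div 2 + card C div 2 < n div 2"
      using pair_halves_less_if_three_parts[OF _ assms(3)] block(3)[OF ABC(1)] block(3)[OF ABC(2)] block(3)[OF ABC(3)]
      by blast
    then show False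
      using large[OF ABC(1,2,4)] large[OF ABC(1,3,6)] large[OF ABC(2,3,5)] by (meson leD)
  qed
  then show ?thesis
    using P(3) by linarith
qed

section \<open>Chains of overlapping queries\<close>

text \<open>The \<open>t\<close>-th query consists of the \<open>k\<close> consecutive balls after \<open>t (k - 1)\<close>,
  shifted left so as not to pass \<open>n\<close>; consecutive queries overlap.\<close>

definition chain_offset :: "nat \<Rightarrow> nat \<Rightarrow> nat \<Rightarrow> nat" where
  "chain_offset k n t = min (t * (k - 1)) (n - k)"

definition chain_queries :: "nat \<Rightarrow> nat \<Rightarrow> nat \<Rightarrow> nat set list" where
  "chain_queries k n L = map (\<lambda>t. {chain_offset k n t + 1 .. chain_offset k n t + k}) [0..<L]"

lemma chain_queries_valid:
  assumes "k \<le> n"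
  shows "\<forall>Q\<in>set (chain_queries k n L). Q \<subseteq> {1..n} \<and> card Q = k"
proof -
  have "chain_offset k n t + k \<le> n" for t
    using assms by (simp add: chain_offset_def)
  then show ?thesis
    by (auto simp: chain_queries_def)
qed

lemma chain_query_mem:
  assumes "t < L"
  shows "{chain_offset k n t + 1 .. chain_offset k n t + k} \<in> set (chain_queries k n L)"
  unfolding chain_queries_def set_map using assms by (intro image_eqI[where x = t]) simp_all

lemma om_answer_eq_chain_prefix:
  assumes "om_consistent n (chain_queries k n L) c c'" "1 \<le> k" "t < L"
  shows "om_answer c' {1..chain_offset k n t + k} = om_answer c {1..chain_offset k n t + k}"
  using assms(3)
proof (induction t)
  case 0
  then show ?case
    using assms(1) chain_query_mem[OF 0, of k n] by (simp add: om_consistent_def chain_offset_def)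
next
  case (Suc t)
  define a where "a = chain_offset k n t"
  define b where "b = chain_offset k n (Suc t)"
  have ab: "a \<le> b" "b \<le> a + (k - 1)"
    by (auto simp: a_def b_def chain_offset_def min_def)
  have "om_answer c' {b + 1..b + k} = om_answer c {b + 1..b + k}"
    using assms(1) chain_query_mem[OF Suc.prems, of k n] by (simp add: om_consistent_def b_def)
  moreover have "om_answer c' {1..a + k} = om_answer c {1..a + k}"
    using Suc by (simp add: a_def)
  moreover have "{1..a + k} \<inter> {b + 1..b + k} \<noteq> {}"
    using ab assms(2) by simp
  moreover have "{1..a + k} \<union> {b + 1..b + k} = {1..b + k}"
    using ab assms(2) by auto
  ultimately show ?case
    using om_answer_eq_Un[of "{1..a + k}" "{b + 1..b + k}" c' c] by (simp add: b_def)
qed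

lemma om_answer_eq_chain:
  assumes "om_consistent n (chain_queries k n L) c c'" "1 \<le> k" "k \<le> n" "0 < L"
    and "m \<le> L * (k - 1) + 1" "m \<le> n"
  shows "om_answer c' {1..m} = om_answer c {1..m}"
proof -
  obtain L' where L: "L = Suc L'"
    using assms(4) by (cases L) auto
  have "{1..m} \<subseteq> {1..chain_offset k n L' + k}"
    using assms(2,3,5,6) by (auto simp: L chain_offset_def min_def)
  moreover have "L' < L"
    using L by simp
  ultimately show ?thesis
    using om_answer_eq_subset om_answer_eq_chain_prefix[OF assms(1,2)] by blast
qed

lemma om_successful_chain_queries:
  assumes "2 \<le> k" "k \<le> n" "n - 1 \<le> L * (k - 1)"
  shows "om_successful k n (chain_queries k n L)"
  unfolding om_successful_def
proof (intro conjI allI)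
  show "\<forall>Q\<in>set (chain_queries k n L). Q \<subseteq> {1..n} \<and> card Q = k"
    using assms(2) by (rule chain_queries_valid)
  fix c
  have "0 < L"
    using assms by (cases L) auto
  then have same: "is_majority_ball n c' i \<longleftrightarrow> is_majority_ball n c i"
    if "om_consistent n (chain_queries k n L) c c'" for c' i
    using om_answer_eq_chain[OF that _ assms(2), of n] assms(1,3)
    by (intro is_majority_ball_cong_om_answer) simp
  show "(\<forall>c'. om_consistent n (chain_queries k n L) c c' \<longrightarrow> (\<forall>i. \<not> is_majority_ball n c' i))
      \<or> (\<exists>i. \<forall>c'. om_consistent n (chain_queries k n L) c c' \<longrightarrow> is_majority_ball n c' i)"
  proof (cases "\<exists>i. is_majority_ball n c i")
    case True
    then show ?thesis
      using same by blast
  next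
    case False
    then show ?thesis
      using same by blast
  qed
qed

lemma om_successful_chain_queries_odd:
  assumes "2 \<le> k" "k \<le> n" "odd n" "n - 2 \<le> L * (k - 1)"
  shows "om_successful k n (chain_queries k n L)"
  unfolding om_successful_def
proof (intro conjI allI disjI2)
  show "\<forall>Q\<in>set (chain_queries k n L). Q \<subseteq> {1..n} \<and> card Q = k"
    using assms(2) by (rule chain_queries_valid)
  fix c
  obtain i where i: "\<forall>c'. om_answer c' {1..n - 1} = om_answer c {1..n - 1} \<longrightarrow> is_majority_ball n c' i"
    using odd_majority_determined[OF assms(3)] by blast
  have "n \<noteq> 2"
    using assms(3) by auto
  then have "0 < L"
    using assms by (cases L) auto
  then have "om_answer c' {1..n - 1} = om_answer c {1..n - 1}"
    if "om_consistent n (chain_queries k n L) c c'" for c'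
    using om_answer_eq_chain[OF that _ assms(2)] assms(1,4) by simp
  then show "\<exists>i. \<forall>c'. om_consistent n (chain_queries k n L) c c' \<longrightarrow> is_majority_ball n c' i"
    using i by blast
qed

section \<open>The number of queries\<close>

lemma ex_om_successful_iff:
  assumes "2 \<le> k" "k \<le> n"
  shows "(\<exists>Qs. length Qs = q \<and> om_successful k n Qs) \<longleftrightarrow>
           (if even n then n - 1 else n - 2) \<le> q * (k - 1)"
proof
  assume "\<exists>Qs. length Qs = q \<and> om_successful k n Qs"
  then show "(if even n then n - 1 else n - 2) \<le> q * (k - 1)"
    using om_successful_length_even om_successful_length_odd assms(1) by fastforce
next
  assume "(if even n then n - 1 else n - 2) \<le> q * (k - 1)"
  then have "om_successful k n (chain_queries k n q)"
    using om_successful_chain_queries om_successful_chain_queries_odd assms by (auto split: if_splits)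
  then show "\<exists>Qs. length Qs = q \<and> om_successful k n Qs"
    by (intro exI[of _ "chain_queries k n q"]) (simp add: chain_queries_def)
qed

lemma Least_le_mult_eq_ceiling:
  fixes d K :: nat
  assumes "0 < K"
  shows "real (LEAST q. d \<le> q * K) = of_int \<lceil>real d / real K\<rceil>"
proof -
  have iff: "d \<le> q * K \<longleftrightarrow> \<lceil>real d / real K\<rceil> \<le> int q" for q
  proof -
    have "d \<le> q * K \<longleftrightarrow> real d \<le> real q * real K"
      by (simp flip: of_nat_mult)
    also have "\<dots> \<longleftrightarrow> real d / real K \<le> real q"
      using assms by (simp add: pos_divide_le_eq)
    finally show ?thesis
      by (simp add: ceiling_le_iff)
  qed
  have "0 \<le> real d / real K"
    by simp
  then have "0 \<le> \<lceil>real d / real K\<rceil>"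
    by (metis ceiling_mono ceiling_zero)
  then have "(LEAST q. d \<le> q * K) = nat \<lceil>real d / real K\<rceil>"
    unfolding iff by (intro Least_equality) (simp_all add: nat_le_iff)
  then show ?thesis
    using \<open>0 \<le> \<lceil>real d / real K\<rceil>\<close> by simp
qed

theorem theorem5:
  fixes k n :: nat
  assumes "2 \<le> k" and "k \<le> n"
  shows "real (N_OM k n) =
           (if even n then of_int \<lceil>(real n - 1) / (real k - 1)\<rceil>
            else of_int \<lceil>(real n - 2) / (real k - 1)\<rceil>)"
proof -
  define d where "d = (if even n then n - 1 else n - 2)"
  have "real (N_OM k n) = real (LEAST q. d \<le> q * (k - 1))"
    unfolding N_OM_def d_def ex_om_successful_iff[OF assms] ..
  also have "\<dots> = of_int \<lceil>real d / real (k - 1)\<rceil>"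
    using assms(1) by (intro Least_le_mult_eq_ceiling) simp
  also have "real d = (if even n then real n - 1 else real n - 2)"
    using assms odd_pos[of n] by (auto simp: d_def)
  finally show ?thesis
    using assms(1) by simp
qed

end
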